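(* Let $x\in\mathbb{R}^n$ be fixed, and for $j\in\{1,\dots,N\}$ let \[ h_j(u)=\gamma_j(x)+u^2+r_jq_ju(u+2\beta(x)),\qquad u\in\mathbb{R}, \] where $r_j\ge0$ are constants, $\gamma_j(x)\ge0$, $\beta(x)\in\mathbb{R}$, and $q_1<q_2<\dots<q_N$ are numbers in $[0,1]$. Let $h=[h_1,\dots,h_N]'$ and $U(x)=\{u\in\mathbb{R}:u(u+2\beta(x))\le0\}$. Then $U(x)$ is compact and \[ \inf_{u\in\mathbb{R}}\sup_{p\in\mathcal{S}_{N-1}}p'h(u)=\inf_{u\in U(x)}\sup_{p\in\mathcal{S}_{N-1}}p'h(u),\qquad \sup_{p\in\mathcal{S}_{N-1}}\inf_{u\in\mathbb{R}}p'h(u)=\sup_{p\in\mathcal{S}_{N-1}}\inf_{u\in U(x)}p'h(u). \] Moreover, let $a_\circ\in\{1,\dots,N\}$, $a_\circ\ne1$, and suppose $r_j=r>0$ and $\gamma_j(x)=\gamma(x)$ for all $j\ne a_\circ$. Then for any $j,k\in\{1,\dots,N\}\setminus\{a_\circ\}$ with $j<k$, $h_j(u)>h_k(u)$ for all $u$ in the interior of $U(x)$.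
   Context: $\mathcal{S}_{N-1}=\{p\in\mathbb{R}^N:p_j\ge0,\sum_jp_j=1\}$ is the unit simplex. *)

theory Defs
  imports "HOL-Analysis.Analysis"
begin

text \<open>The unit unit_simplex S_{N-1}, with probability vectors represented as functions
  on indices 1..N (and 0 outside, for a canonical representation).\<close>
definition unit_simplex :: "nat \<Rightarrow> (nat \<Rightarrow> real) set" where
  "unit_simplex N = {p. (\<forall>j\<in>{1..N}. 0 \<le> p j) \<and> (\<Sum>j=1..N. p j) = 1
                  \<and> (\<forall>j. j \<notin> {1..N} \<longrightarrow> p j = 0)}"

definition hfun :: "(nat \<Rightarrow> 'a \<Rightarrow> real) \<Rightarrow> (nat \<Rightarrow> real) \<Rightarrow> (nat \<Rightarrow> real)
                    \<Rightarrow> ('a \<Rightarrow> real) \<Rightarrow> 'a \<Rightarrow> nat \<Rightarrow> real \<Rightarrow> real" where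
  "hfun \<gamma> r q \<beta> x j u = \<gamma> j x + u^2 + r j * q j * u * (u + 2 * \<beta> x)"

definition ph :: "nat \<Rightarrow> (nat \<Rightarrow> real) \<Rightarrow> (nat \<Rightarrow> real \<Rightarrow> real) \<Rightarrow> real \<Rightarrow> real" where
  "ph N p h u = (\<Sum>j=1..N. p j * h j u)"

definition Uset :: "('a \<Rightarrow> real) \<Rightarrow> 'a \<Rightarrow> real set" where
  "Uset \<beta> x = {u. u * (u + 2 * \<beta> x) \<le> 0}"

end

theory Submission
  imports Defs
begin

text \<open>Outside \<open>U(x)\<close> the coupling term \<open>r\<^sub>j q\<^sub>j u (u + 2\<beta>(x))\<close> is nonnegative, so every \<open>h\<^sub>j\<close>, and hence
  every mixture \<open>p'h\<close>, is at least its value at \<open>u = 0 \<in> U(x)\<close>; thus both infima over \<open>\<real>\<close> may be taken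
  over \<open>U(x)\<close>, the closed interval between \<open>0\<close> and \<open>-2\<beta>(x)\<close>. For indices sharing \<open>r\<close> and \<open>\<gamma>\<close>,
  \<open>h\<^sub>j - h\<^sub>k = r (q\<^sub>j - q\<^sub>k) u (u + 2\<beta>(x))\<close>, a product of two negative factors on the interior of \<open>U(x)\<close>.\<close>

lemma INF_UNIV_eq_INF_if_dominated:
  fixes f :: "'a \<Rightarrow> 'b::complete_lattice"
  assumes "a \<in> S" and "\<And>u. u \<notin> S \<Longrightarrow> f a \<le> f u"
  shows "(INF u\<in>UNIV. f u) = (INF u\<in>S. f u)"
proof (rule antisym)
  show "(INF u\<in>UNIV. f u) \<le> (INF u\<in>S. f u)"
    by (rule INF_superset_mono) auto
  have "(INF u\<in>S. f u) \<le> f u" for u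
  proof (cases "u \<in> S")
    case False
    have "(INF u\<in>S. f u) \<le> f a" using \<open>a \<in> S\<close> by (rule INF_lower)
    also have "\<dots> \<le> f u" using assms(2) False .
    finally show ?thesis .
  qed (rule INF_lower)
  then show "(INF u\<in>S. f u) \<le> (INF u\<in>UNIV. f u)"
    by (rule INF_greatest)
qed

lemma Uset_eq_atLeastAtMost:
  "Uset \<beta> x = {min 0 (-2 * \<beta> x) .. max 0 (-2 * \<beta> x)}"
  unfolding Uset_def by (auto simp: mult_le_0_iff)

lemma compact_Uset: "compact (Uset \<beta> x)"
  unfolding Uset_eq_atLeastAtMost by (rule compact_Icc)

lemma zero_in_Uset: "0 \<in> Uset \<beta> x"
  unfolding Uset_def by simp

lemma interior_UsetD:
  assumes "u \<in> interior (Uset \<beta> x)"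
  shows "u * (u + 2 * \<beta> x) < 0"
  using assms unfolding Uset_eq_atLeastAtMost interior_atLeastAtMost_real
  by (auto simp: mult_less_0_iff)

lemma hfun_eq_at_zero_plus:
  "hfun \<gamma> r q \<beta> x j u = hfun \<gamma> r q \<beta> x j 0 + u\<^sup>2 + r j * q j * (u * (u + 2 * \<beta> x))"
  unfolding hfun_def by (simp add: algebra_simps)

lemma hfun_diff_same_rate:
  assumes "r j = r0" "r k = r0" "\<gamma> j x = \<gamma> k x"
  shows "hfun \<gamma> r q \<beta> x j u - hfun \<gamma> r q \<beta> x k u = r0 * (q j - q k) * (u * (u + 2 * \<beta> x))"
  unfolding hfun_def assms by (simp add: algebra_simps)

lemma ph_mono:
  assumes "p \<in> unit_simplex N" and "\<And>j. j \<in> {1..N} \<Longrightarrow> h j u \<le> h j v"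
  shows "ph N p h u \<le> ph N p h v"
  unfolding ph_def
proof (rule sum_mono)
  fix j assume "j \<in> {1..N}"
  then show "p j * h j u \<le> p j * h j v"
    using assms by (intro mult_left_mono) (auto simp: unit_simplex_def)
qed

theorem lemma2:
  fixes N :: nat and x :: "real ^ 'n"
    and \<gamma> :: "nat \<Rightarrow> real ^ 'n \<Rightarrow> real" and \<beta> :: "real ^ 'n \<Rightarrow> real"
    and r q :: "nat \<Rightarrow> real"
  assumes N: "N \<ge> 1"
    and r_nonneg: "\<forall>j\<in>{1..N}. 0 \<le> r j"
    and \<gamma>_nonneg: "\<forall>j\<in>{1..N}. 0 \<le> \<gamma> j x"
    and q_mono: "\<forall>j\<in>{1..N}. \<forall>k\<in>{1..N}. j < k \<longrightarrow> q j < q k"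
    and q_range: "\<forall>j\<in>{1..N}. 0 \<le> q j \<and> q j \<le> 1"
  shows "compact (Uset \<beta> x)
    \<and> (INF u\<in>UNIV. SUP p\<in>unit_simplex N. ereal (ph N p (hfun \<gamma> r q \<beta> x) u))
        = (INF u\<in>Uset \<beta> x. SUP p\<in>unit_simplex N. ereal (ph N p (hfun \<gamma> r q \<beta> x) u))
    \<and> (SUP p\<in>unit_simplex N. INF u\<in>UNIV. ereal (ph N p (hfun \<gamma> r q \<beta> x) u))
        = (SUP p\<in>unit_simplex N. INF u\<in>Uset \<beta> x. ereal (ph N p (hfun \<gamma> r q \<beta> x) u))
    \<and> (\<forall>a0 r0 \<gamma>0. a0 \<in> {1..N} \<and> a0 \<noteq> 1 \<and> 0 < r0
         \<and> (\<forall>j\<in>{1..N} - {a0}. r j = r0 \<and> \<gamma> j x = \<gamma>0)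
         \<longrightarrow> (\<forall>j\<in>{1..N} - {a0}. \<forall>k\<in>{1..N} - {a0}. j < k \<longrightarrow>
                (\<forall>u\<in>interior (Uset \<beta> x). hfun \<gamma> r q \<beta> x j u > hfun \<gamma> r q \<beta> x k u)))"
proof -
  let ?h = "hfun \<gamma> r q \<beta> x"
  have outside: "ph N p ?h 0 \<le> ph N p ?h u" if "p \<in> unit_simplex N" "u \<notin> Uset \<beta> x" for p u
  proof (rule ph_mono[OF \<open>p \<in> unit_simplex N\<close>])
    fix j assume "j \<in> {1..N}"
    then have "0 \<le> r j * q j * (u * (u + 2 * \<beta> x))"
      using r_nonneg q_range \<open>u \<notin> Uset \<beta> x\<close> by (auto simp: Uset_def)
    then show "?h j 0 \<le> ?h j u"
      by (subst hfun_eq_at_zero_plus[of _ _ _ _ _ _ u]) simp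
  qed
  have ordered: "?h j u > ?h k u"
    if "0 < r0" "\<forall>i\<in>{1..N} - {a0}. r i = r0 \<and> \<gamma> i x = \<gamma>0"
      "j \<in> {1..N} - {a0}" "k \<in> {1..N} - {a0}" "j < k" "u \<in> interior (Uset \<beta> x)"
    for a0 r0 \<gamma>0 j k u
  proof -
    have "?h j u - ?h k u = r0 * (q j - q k) * (u * (u + 2 * \<beta> x))"
      using that(2-4) by (intro hfun_diff_same_rate) auto
    moreover have "r0 * (q j - q k) < 0"
      using that(1,3-5) q_mono by (simp add: mult_pos_neg)
    moreover have "0 < r0 * (q j - q k) * (u * (u + 2 * \<beta> x))"
      using calculation(2) interior_UsetD[OF that(6)] by (rule mult_neg_neg)
    ultimately show ?thesis by simp
  qed
  have inf_sup: "(INF u\<in>UNIV. SUP p\<in>unit_simplex N. ereal (ph N p ?h u))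
      = (INF u\<in>Uset \<beta> x. SUP p\<in>unit_simplex N. ereal (ph N p ?h u))"
    using outside by (intro INF_UNIV_eq_INF_if_dominated[OF zero_in_Uset] SUP_mono) auto
  have sup_inf: "(SUP p\<in>unit_simplex N. INF u\<in>UNIV. ereal (ph N p ?h u))
      = (SUP p\<in>unit_simplex N. INF u\<in>Uset \<beta> x. ereal (ph N p ?h u))"
    using outside by (intro SUP_cong refl INF_UNIV_eq_INF_if_dominated[OF zero_in_Uset]) auto
  show ?thesis
    using ordered by (intro conjI compact_Uset inf_sup sup_inf allI impI ballI) blast
qed

end
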